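(* Let $H$ be a normal subgroup of a group $G$. If $H$ and $G/H$ are Jordan groups, then any set of pairwise nonisomorphic simple nonabelian finite subgroups of $G$ is finite.
   Context: A group $G$ is called Jordan if there exists a positive integer $d$, depending only on $G$, such that every finite subgroup $K$ of $G$ contains a normal abelian subgroup of index at most $d$ in $K$. *)

theory Defs
  imports "HOL-Algebra.Algebra"
begin

definition jordan_group :: "('a, 'b) monoid_scheme \<Rightarrow> bool" where
  "jordan_group G \<longleftrightarrow> group G \<and>
     (\<exists>d::nat. d > 0 \<and>
        (\<forall>K. subgroup K G \<and> finite K \<longrightarrow>
           (\<exists>A. A \<lhd> (G\<lparr>carrier := K\<rparr>) \<and> comm_group (G\<lparr>carrier := A\<rparr>) \<and>
                card K \<le> d * card A)))"

end

theory Submission imports Defs begin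

text \<open>A finite simple nonabelian subgroup K of G meets the normal subgroup H either in all
of K or trivially, so K is isomorphic to a subgroup of H or of G/H. In a Jordan group with
constant d such a K has a normal abelian subgroup of index at most d, which simplicity forces
to be trivial, so card K \<le> d. With the orders bounded, K is determined up to isomorphism by
one of finitely many multiplication tables.\<close>

definition mult_table :: "('a, 'b) monoid_scheme \<Rightarrow> (nat \<Rightarrow> 'a) \<Rightarrow> nat \<Rightarrow> nat \<Rightarrow> nat \<Rightarrow> nat" where
  "mult_table M f n = (\<lambda>i\<in>{..<n}. \<lambda>j\<in>{..<n}. inv_into {..<n} f (f i \<otimes>\<^bsub>M\<^esub> f j))"

lemma mult_table_in_PiE:
  assumes "monoid M" and "bij_betw f {..<n} (carrier M)"
  shows "mult_table M f n \<in> {..<n} \<rightarrow>\<^sub>E {..<n} \<rightarrow>\<^sub>E {..<n}"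
proof -
  have "inv_into {..<n} f (f i \<otimes>\<^bsub>M\<^esub> f j) < n" if "i < n" "j < n" for i j
  proof -
    have "f i \<in> carrier M" "f j \<in> carrier M" using assms(2) that by (auto dest: bij_betwE)
    then have "f i \<otimes>\<^bsub>M\<^esub> f j \<in> f ` {..<n}"
      using assms by (simp add: bij_betw_def monoid.m_closed)
    then show ?thesis by (metis inv_into_into lessThan_iff)
  qed
  then show ?thesis unfolding mult_table_def by (auto simp: restrict_PiE_iff)
qed

lemma iso_if_mult_table_eq:
  assumes "monoid M" "monoid N"
    and f: "bij_betw f {..<n} (carrier M)" and g: "bij_betw g {..<n} (carrier N)"
    and eq: "mult_table M f n = mult_table N g n"
  shows "M \<cong> N"
proof -
  define h where "h = g \<circ> inv_into {..<n} f"
  have h_bij: "bij_betw h (carrier M) (carrier N)"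
    unfolding h_def using bij_betw_trans[OF bij_betw_inv_into[OF f] g] .
  have h_mult: "h (f i \<otimes>\<^bsub>M\<^esub> f j) = h (f i) \<otimes>\<^bsub>N\<^esub> h (f j)" if "i < n" "j < n" for i j
  proof -
    have "g j \<in> carrier N" "g i \<in> carrier N" using g that by (auto dest: bij_betwE)
    then have "g i \<otimes>\<^bsub>N\<^esub> g j \<in> g ` {..<n}"
      using g \<open>monoid N\<close> by (simp add: bij_betw_def monoid.m_closed)
    moreover have "inv_into {..<n} f (f i \<otimes>\<^bsub>M\<^esub> f j) = inv_into {..<n} g (g i \<otimes>\<^bsub>N\<^esub> g j)"
      using fun_cong[OF fun_cong[OF eq, of i], of j] that by (simp add: mult_table_def)
    moreover have "inv_into {..<n} f (f i) = i" "inv_into {..<n} f (f j) = j"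
      using f that by (simp_all add: bij_betw_def)
    ultimately show ?thesis by (simp add: h_def f_inv_into_f)
  qed
  have "h \<in> hom M N"
  proof (rule homI)
    show "h x \<in> carrier N" if "x \<in> carrier M" for x
      using h_bij that by (auto dest: bij_betwE)
    show "h (x \<otimes>\<^bsub>M\<^esub> y) = h x \<otimes>\<^bsub>N\<^esub> h y" if xy: "x \<in> carrier M" "y \<in> carrier M" for x y
    proof -
      obtain i j where "i < n" "j < n" "x = f i" "y = f j"
        using f xy unfolding bij_betw_def by (metis imageE lessThan_iff)
      then show ?thesis using h_mult by simp
    qed
  qed
  then show ?thesis using h_bij by (intro is_isoI isoI)
qed

lemma finite_if_pairwise_non_iso_card_bounded:
  fixes \<M> :: "('a, 'b) monoid_scheme set"
  assumes bounded: "\<And>M. M \<in> \<M> \<Longrightarrow> monoid M \<and> finite (carrier M) \<and> card (carrier M) \<le> n"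
    and non_iso: "\<And>M N. M \<in> \<M> \<Longrightarrow> N \<in> \<M> \<Longrightarrow> M \<cong> N \<Longrightarrow> M = N"
  shows "finite \<M>"
proof -
  define enum :: "('a, 'b) monoid_scheme \<Rightarrow> nat \<Rightarrow> 'a" where
    "enum M = (SOME f. bij_betw f {..<card (carrier M)} (carrier M))" for M
  have enum: "bij_betw (enum M) {..<card (carrier M)} (carrier M)" if "M \<in> \<M>" for M
  proof -
    have "\<exists>f. bij_betw f {..<card (carrier M)} (carrier M)"
      using ex_bij_betw_nat_finite[of "carrier M"] bounded[OF that] by (simp add: atLeast0LessThan)
    then show ?thesis unfolding enum_def by (rule someI_ex)
  qed
  define table where "table M = (card (carrier M), mult_table M (enum M) (card (carrier M)))" for M
  have "table M \<in> (\<Union>m\<le>n. {m} \<times> ({..<m} \<rightarrow>\<^sub>E {..<m} \<rightarrow>\<^sub>E {..<m}))" if "M \<in> \<M>" for M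
    using bounded[OF that] mult_table_in_PiE[OF _ enum[OF that]] by (auto simp: table_def)
  then have "table ` \<M> \<subseteq> (\<Union>m\<le>n. {m} \<times> ({..<m} \<rightarrow>\<^sub>E {..<m} \<rightarrow>\<^sub>E {..<m}))"
    by blast
  moreover have "finite (\<Union>m\<le>n. {m} \<times> ({..<m} \<rightarrow>\<^sub>E {..<m} \<rightarrow>\<^sub>E {..<m}))"
    by (intro finite_UN_I finite_cartesian_product finite_PiE) auto
  ultimately have "finite (table ` \<M>)"
    by (rule finite_subset)
  moreover have "inj_on table \<M>"
  proof (rule inj_onI)
    fix M N assume M: "M \<in> \<M>" and N: "N \<in> \<M>" and "table M = table N"
    then have card: "card (carrier M) = card (carrier N)"
      and table: "mult_table M (enum M) (card (carrier N)) = mult_table N (enum N) (card (carrier N))"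
      by (auto simp: table_def)
    have "bij_betw (enum M) {..<card (carrier N)} (carrier M)" using enum[OF M] card by simp
    then have "M \<cong> N"
      using bounded[OF M] bounded[OF N] by (intro iso_if_mult_table_eq[OF _ _ _ enum[OF N] table]) auto
    then show "M = N" using non_iso M N by blast
  qed
  ultimately show ?thesis by (rule finite_imageD)
qed

lemma finite_if_pairwise_non_iso_subgroups_card_bounded:
  assumes "group G"
    and bounded: "\<And>K. K \<in> S \<Longrightarrow> subgroup K G \<and> finite K \<and> card K \<le> n"
    and non_iso: "\<And>K L. K \<in> S \<Longrightarrow> L \<in> S \<Longrightarrow> K \<noteq> L \<Longrightarrow> \<not> (G\<lparr>carrier := K\<rparr> \<cong> G\<lparr>carrier := L\<rparr>)"
  shows "finite S"
proof -
  have "finite ((\<lambda>K. G\<lparr>carrier := K\<rparr>) ` S)"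
  proof (rule finite_if_pairwise_non_iso_card_bounded)
    fix M assume "M \<in> (\<lambda>K. G\<lparr>carrier := K\<rparr>) ` S"
    then obtain K where "K \<in> S" "M = G\<lparr>carrier := K\<rparr>" by blast
    then show "monoid M \<and> finite (carrier M) \<and> card (carrier M) \<le> n"
      using bounded group.is_monoid[OF group.subgroup_imp_group[OF \<open>group G\<close>]] by simp
  next
    fix M N assume "M \<in> (\<lambda>K. G\<lparr>carrier := K\<rparr>) ` S" "N \<in> (\<lambda>K. G\<lparr>carrier := K\<rparr>) ` S" "M \<cong> N"
    then obtain K L where "K \<in> S" "L \<in> S" "M = G\<lparr>carrier := K\<rparr>" "N = G\<lparr>carrier := L\<rparr>"
      by blast
    with \<open>M \<cong> N\<close> show "M = N" using non_iso by (cases "K = L") auto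
  qed
  moreover have "inj_on (\<lambda>K. G\<lparr>carrier := K\<rparr>) S"
  proof (rule inj_onI)
    fix K L assume "G\<lparr>carrier := K\<rparr> = G\<lparr>carrier := L\<rparr>"
    then have "carrier (G\<lparr>carrier := K\<rparr>) = carrier (G\<lparr>carrier := L\<rparr>)" by (rule arg_cong)
    then show "K = L" by simp
  qed
  ultimately show ?thesis by (rule finite_imageD)
qed

lemma simple_nonabelian_iso:
  assumes "G \<cong> F" "group F" "simple_group G" "\<not> comm_group G"
  shows "simple_group F" "\<not> comm_group F"
proof -
  interpret simple_group G by fact
  show "simple_group F"
    using assms(1,2) iso_simple by (auto simp: is_iso_def)
  show "\<not> comm_group F"
  proof
    assume "comm_group F"
    then show False
      using comm_group.iso_imp_comm_group[OF _ iso_sym[OF assms(1)] is_monoid] assms(4) by blast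
  qed
qed

lemma jordan_group_simple_subgroups_card_bounded:
  assumes "jordan_group G"
  obtains d where "\<And>K. subgroup K G \<Longrightarrow> finite K \<Longrightarrow> simple_group (G\<lparr>carrier := K\<rparr>) \<Longrightarrow>
      \<not> comm_group (G\<lparr>carrier := K\<rparr>) \<Longrightarrow> card K \<le> d"
proof -
  obtain d where d: "\<And>K. subgroup K G \<Longrightarrow> finite K \<Longrightarrow> \<exists>A. A \<lhd> G\<lparr>carrier := K\<rparr> \<and>
      comm_group (G\<lparr>carrier := A\<rparr>) \<and> card K \<le> d * card A"
    using assms unfolding jordan_group_def by blast
  have "card K \<le> d" if K: "subgroup K G" "finite K" "simple_group (G\<lparr>carrier := K\<rparr>)"
      "\<not> comm_group (G\<lparr>carrier := K\<rparr>)" for K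
  proof -
    interpret simple_group "G\<lparr>carrier := K\<rparr>" by fact
    obtain A where A: "A \<lhd> G\<lparr>carrier := K\<rparr>" "comm_group (G\<lparr>carrier := A\<rparr>)" "card K \<le> d * card A"
      using d K by blast
    have "A \<noteq> K" using A(2) K(4) by auto
    then have "A = {\<one>\<^bsub>G\<^esub>}" using no_real_normal_subgroup[OF A(1)] by simp
    then show ?thesis using A(3) by simp
  qed
  then show thesis by (rule that)
qed

lemma (in normal) simple_subgroup_subset_or_Int_trivial:
  assumes "subgroup K G" "simple_group (G\<lparr>carrier := K\<rparr>)"
  shows "K \<subseteq> H \<or> H \<inter> K = {\<one>}"
  using simple_group.no_real_normal_subgroup[OF assms(2) normal_Int_subgroup[OF assms(1) normal_axioms]]
  by auto

lemma (in group_hom) iso_onto_image_of_inj_on_subgroup: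
  assumes "subgroup K G" "inj_on h K"
  shows "G\<lparr>carrier := K\<rparr> \<cong> H\<lparr>carrier := h ` K\<rparr>"
proof (rule is_isoI)
  show "h \<in> iso (G\<lparr>carrier := K\<rparr>) (H\<lparr>carrier := h ` K\<rparr>)"
    using group_hom.homh[OF induced_group_hom[OF assms(1)]] assms(2) by (simp add: iso_def bij_betw_def)
qed

lemma (in normal) group_hom_r_coset_Mod: "group_hom G (G Mod H) (\<lambda>a. H #> a)"
  using r_coset_hom_Mod factorgroup_is_group by (simp add: group_hom_def group_hom_axioms_def)

lemma (in normal) iso_quotient_image_if_Int_trivial:
  assumes K: "subgroup K G" and trivial: "H \<inter> K = {\<one>}"
  shows "G\<lparr>carrier := K\<rparr> \<cong> (G Mod H)\<lparr>carrier := (\<lambda>a. H #> a) ` K\<rparr>"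
proof -
  interpret coset: group_hom G "G Mod H" "\<lambda>a. H #> a" by (rule group_hom_r_coset_Mod)
  have "H #> x = H \<longleftrightarrow> x \<in> H" if "x \<in> K" for x
    using coset_join1 coset_join2 subgroup.mem_carrier[OF K that] subgroup_axioms by blast
  then have "kernel (G\<lparr>carrier := K\<rparr>) (G Mod H) (\<lambda>a. H #> a) = H \<inter> K"
    by (auto simp: kernel_def FactGroup_def)
  then have "inj_on (\<lambda>a. H #> a) K"
    using coset.inj_on_subgroup_iff_trivial_ker[OF K] trivial by simp
  then show ?thesis by (rule coset.iso_onto_image_of_inj_on_subgroup[OF K])
qed

lemma (in normal) simple_subgroups_card_bounded_if_jordan:
  assumes "jordan_group (G\<lparr>carrier := H\<rparr>)" "jordan_group (G Mod H)"
  obtains d where "\<And>K. subgroup K G \<Longrightarrow> finite K \<Longrightarrow> simple_group (G\<lparr>carrier := K\<rparr>) \<Longrightarrow>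
      \<not> comm_group (G\<lparr>carrier := K\<rparr>) \<Longrightarrow> card K \<le> d"
proof -
  obtain d\<^sub>H where d\<^sub>H: "\<And>K. subgroup K (G\<lparr>carrier := H\<rparr>) \<Longrightarrow> finite K \<Longrightarrow>
      simple_group (G\<lparr>carrier := K\<rparr>) \<Longrightarrow> \<not> comm_group (G\<lparr>carrier := K\<rparr>) \<Longrightarrow> card K \<le> d\<^sub>H"
    using jordan_group_simple_subgroups_card_bounded[OF assms(1)] by auto
  obtain d\<^sub>Q where d\<^sub>Q: "\<And>K. subgroup K (G Mod H) \<Longrightarrow> finite K \<Longrightarrow>
      simple_group ((G Mod H)\<lparr>carrier := K\<rparr>) \<Longrightarrow> \<not> comm_group ((G Mod H)\<lparr>carrier := K\<rparr>) \<Longrightarrow>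
      card K \<le> d\<^sub>Q"
    using jordan_group_simple_subgroups_card_bounded[OF assms(2)] by auto
  have "card K \<le> max d\<^sub>H d\<^sub>Q" if K: "subgroup K G" "finite K" "simple_group (G\<lparr>carrier := K\<rparr>)"
      "\<not> comm_group (G\<lparr>carrier := K\<rparr>)" for K
  proof -
    consider "K \<subseteq> H" | "H \<inter> K = {\<one>}"
      using simple_subgroup_subset_or_Int_trivial K by blast
    then show ?thesis
    proof cases
      case 1
      then have "subgroup K (G\<lparr>carrier := H\<rparr>)"
        using subgroup_incl[OF K(1) subgroup_axioms] by simp
      then have "card K \<le> d\<^sub>H" using d\<^sub>H K(2-4) by blast
      then show ?thesis by simp
    next
      case 2
      let ?K' = "(\<lambda>a. H #> a) ` K"
      have iso: "G\<lparr>carrier := K\<rparr> \<cong> (G Mod H)\<lparr>carrier := ?K'\<rparr>"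
        using iso_quotient_image_if_Int_trivial[OF K(1) 2] .
      have K': "subgroup ?K' (G Mod H)"
        by (rule group_hom.subgroup_img_is_subgroup[OF group_hom_r_coset_Mod K(1)])
      have "group ((G Mod H)\<lparr>carrier := ?K'\<rparr>)"
        by (rule group.subgroup_imp_group[OF factorgroup_is_group K'])
      then have "card ?K' \<le> d\<^sub>Q"
        using d\<^sub>Q[OF K' finite_imageI[OF K(2)]] simple_nonabelian_iso[OF iso _ K(3,4)] by blast
      moreover have "card ?K' = card K" using iso_same_card[OF iso] by simp
      ultimately show ?thesis by simp
    qed
  qed
  then show thesis by (rule that)
qed

theorem theorem1p12:
  fixes G :: "('a, 'b) monoid_scheme" and H :: "'a set" and S :: "'a set set"
  assumes "group G"
    and "H \<lhd> G"
    and "jordan_group (G\<lparr>carrier := H\<rparr>)"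
    and "jordan_group (G Mod H)"
    and "\<And>K. K \<in> S \<Longrightarrow> subgroup K G \<and> finite K \<and>
             simple_group (G\<lparr>carrier := K\<rparr>) \<and> \<not> comm_group (G\<lparr>carrier := K\<rparr>)"
    and "\<And>K L. K \<in> S \<Longrightarrow> L \<in> S \<Longrightarrow> K \<noteq> L \<Longrightarrow>
             \<not> (G\<lparr>carrier := K\<rparr> \<cong> G\<lparr>carrier := L\<rparr>)"
  shows "finite S"
proof -
  interpret normal H G by fact
  obtain d where d: "\<And>K. subgroup K G \<Longrightarrow> finite K \<Longrightarrow> simple_group (G\<lparr>carrier := K\<rparr>) \<Longrightarrow>
      \<not> comm_group (G\<lparr>carrier := K\<rparr>) \<Longrightarrow> card K \<le> d"
    using simple_subgroups_card_bounded_if_jordan[OF assms(3,4)] by blast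
  show ?thesis
  proof (rule finite_if_pairwise_non_iso_subgroups_card_bounded[OF assms(1) _ assms(6)])
    show "subgroup K G \<and> finite K \<and> card K \<le> d" if "K \<in> S" for K
      using assms(5)[OF that] d by blast
  qed
qed

end
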